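(* Let $P$ be a finite poset, $R$ a commutative unital ring, and $D$ a derivation of $I^3(P,R)$. Then $D(e_x)=0$ for all $x\in P$.
   Context: For a finite poset $P$, $P^3_\le=\{(x,y,z)\in P^3: x\le y\le z\}$, and $I^3(P,R)$ is the $R$-module of functions $f:P^3_\le\to R$ with multiplication $(fg)(x_1,x_2,x_3)=\sum f(x_1,y_1,y_2)g(y_1,y_2,x_3)$ over all $x_1\le y_1\le x_2\le y_2\le x_3$. $e_x\in I^3(P,R)$ is the function equal to $1$ at $(x,x,x)$ and $0$ elsewhere. A derivation is an $R$-linear map $D:I^3(P,R)\to I^3(P,R)$ with $D(fg)=D(f)g+fD(g)$. *)

theory Defs
  imports Main
begin

text \<open>The finite poset P is the type 'a of class order with finite UNIV.
Elements of I^3(P,R) are functions 'a => 'a => 'a => 'r vanishing off P^3_le.\<close>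

definition I3 :: "('a::order \<Rightarrow> 'a \<Rightarrow> 'a \<Rightarrow> 'r::comm_ring_1) set" where
  "I3 = {f. \<forall>x y z. \<not> (x \<le> y \<and> y \<le> z) \<longrightarrow> f x y z = 0}"

definition I3_mult :: "('a::{order,finite} \<Rightarrow> 'a \<Rightarrow> 'a \<Rightarrow> 'r::comm_ring_1)
     \<Rightarrow> ('a \<Rightarrow> 'a \<Rightarrow> 'a \<Rightarrow> 'r) \<Rightarrow> ('a \<Rightarrow> 'a \<Rightarrow> 'a \<Rightarrow> 'r)" where
  "I3_mult f g = (\<lambda>x1 x2 x3.
     \<Sum>(y1, y2) \<in> {(y1, y2). x1 \<le> y1 \<and> y1 \<le> x2 \<and> x2 \<le> y2 \<and> y2 \<le> x3}.
       f x1 y1 y2 * g y1 y2 x3)"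

definition I3_e :: "'a::order \<Rightarrow> ('a \<Rightarrow> 'a \<Rightarrow> 'a \<Rightarrow> 'r::comm_ring_1)" where
  "I3_e x = (\<lambda>a b c. if a = x \<and> b = x \<and> c = x then 1 else 0)"

definition I3_derivation :: "(('a::{order,finite} \<Rightarrow> 'a \<Rightarrow> 'a \<Rightarrow> 'r::comm_ring_1)
     \<Rightarrow> ('a \<Rightarrow> 'a \<Rightarrow> 'a \<Rightarrow> 'r)) \<Rightarrow> bool" where
  "I3_derivation D \<longleftrightarrow>
     (\<forall>f\<in>I3. D f \<in> I3) \<and>
     (\<forall>f\<in>I3. \<forall>g\<in>I3. D (\<lambda>x y z. f x y z + g x y z) = (\<lambda>x y z. D f x y z + D g x y z)) \<and>
     (\<forall>r. \<forall>f\<in>I3. D (\<lambda>x y z. r * f x y z) = (\<lambda>x y z. r * D f x y z)) \<and>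
     (\<forall>f\<in>I3. \<forall>g\<in>I3. D (I3_mult f g) = (\<lambda>x y z. I3_mult (D f) g x y z + I3_mult f (D g) x y z))"

end

theory Submission
  imports Defs
begin

text \<open>Write \<open>d = D(e\<^sub>x)\<close>. Since \<open>e\<^sub>x\<close> is idempotent, \<open>d = d e\<^sub>x + e\<^sub>x d\<close>, which
  forces \<open>d\<close> to vanish outside the triples \<open>(a,x,x)\<close> and \<open>(x,x,z)\<close>, and gives \<open>d(x,x,x) = 0\<close>.
  The remaining values are killed by differentiating the zero products
  \<open>e\<^sub>a\<^sub>a\<^sub>x e\<^sub>x = 0\<close> (for \<open>a \<noteq> x\<close>) and \<open>e\<^sub>x e\<^sub>x\<^sub>z\<^sub>z = 0\<close> (for \<open>z \<noteq> x\<close>), using \<open>D 0 = 0\<close>.\<close>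

definition I3_unit :: "'a::order \<Rightarrow> 'a \<Rightarrow> 'a \<Rightarrow> ('a \<Rightarrow> 'a \<Rightarrow> 'a \<Rightarrow> 'r::comm_ring_1)" where
  "I3_unit p q r = (\<lambda>a b c. if a = p \<and> b = q \<and> c = r then 1 else 0)"

lemma I3_unit_in_I3: "p \<le> q \<Longrightarrow> q \<le> r \<Longrightarrow> I3_unit p q r \<in> I3"
  unfolding I3_unit_def I3_def by auto

lemma I3_e_eq_unit: "I3_e x = I3_unit x x x"
  unfolding I3_unit_def I3_e_def by simp

lemma I3_e_in_I3: "I3_e x \<in> I3"
  unfolding I3_e_eq_unit by (rule I3_unit_in_I3) auto

lemma I3_mult_unit_right:
  fixes f :: "'a::{order,finite} \<Rightarrow> 'a \<Rightarrow> 'a \<Rightarrow> 'r::comm_ring_1"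
  shows "I3_mult f (I3_unit p q r) a b z =
    (if z = r \<and> a \<le> p \<and> p \<le> b \<and> b \<le> q \<and> q \<le> r then f a p q else 0)"
proof -
  let ?S = "{(y1, y2). a \<le> y1 \<and> y1 \<le> b \<and> b \<le> y2 \<and> y2 \<le> z}"
  have "I3_mult f (I3_unit p q r) a b z =
      (\<Sum>k\<in>?S. if k = (p, q) then (if z = r then f a p q else 0) else 0)"
    unfolding I3_mult_def I3_unit_def by (intro sum.cong) (auto split: if_splits)
  also have "\<dots> = (if (p, q) \<in> ?S then (if z = r then f a p q else 0) else 0)"
    by (subst sum.delta) auto
  finally show ?thesis by auto
qed

lemma I3_mult_unit_left:
  fixes g :: "'a::{order,finite} \<Rightarrow> 'a \<Rightarrow> 'a \<Rightarrow> 'r::comm_ring_1"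
  shows "I3_mult (I3_unit p q r) g a b z =
    (if a = p \<and> p \<le> q \<and> q \<le> b \<and> b \<le> r \<and> r \<le> z then g q r z else 0)"
proof -
  let ?S = "{(y1, y2). a \<le> y1 \<and> y1 \<le> b \<and> b \<le> y2 \<and> y2 \<le> z}"
  have "I3_mult (I3_unit p q r) g a b z =
      (\<Sum>k\<in>?S. if k = (q, r) then (if a = p then g q r z else 0) else 0)"
    unfolding I3_mult_def I3_unit_def by (intro sum.cong) (auto split: if_splits)
  also have "\<dots> = (if (q, r) \<in> ?S then (if a = p then g q r z else 0) else 0)"
    by (subst sum.delta) auto
  finally show ?thesis by auto
qed

lemma I3_mult_unit_unit_eq_zero:
  fixes p q r :: "'a::{order,finite}"
  assumes "(q, r) \<noteq> (p', q')"
  shows "I3_mult (I3_unit p q r) (I3_unit p' q' r') = (\<lambda>a b c. 0 :: 'r::comm_ring_1)"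
  using assms unfolding fun_eq_iff I3_mult_unit_right by (auto simp: I3_unit_def)

lemma I3_mult_e_idem: "I3_mult (I3_e x) (I3_e x) = (I3_e x :: 'a::{order,finite} \<Rightarrow> _)"
  unfolding I3_e_eq_unit fun_eq_iff I3_mult_unit_right by (auto simp: I3_unit_def)

context
  fixes D :: "('a::{order,finite} \<Rightarrow> 'a \<Rightarrow> 'a \<Rightarrow> 'r::comm_ring_1) \<Rightarrow> ('a \<Rightarrow> 'a \<Rightarrow> 'a \<Rightarrow> 'r)"
  assumes D: "I3_derivation D"
begin

lemma I3_derivation_Leibniz:
  "f \<in> I3 \<Longrightarrow> g \<in> I3 \<Longrightarrow> D (I3_mult f g) a b c = I3_mult (D f) g a b c + I3_mult f (D g) a b c"
  using D unfolding I3_derivation_def by simp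

lemma I3_derivation_zero: "D (\<lambda>a b c. 0) = (\<lambda>a b c. 0)"
proof -
  have zero: "(\<lambda>a b c. 0) \<in> I3" unfolding I3_def by simp
  have additive: "\<And>f g. f \<in> I3 \<Longrightarrow> g \<in> I3 \<Longrightarrow>
      D (\<lambda>x y z. f x y z + g x y z) = (\<lambda>x y z. D f x y z + D g x y z)"
    using D unfolding I3_derivation_def by blast
  show ?thesis
    using additive[OF zero zero] by (simp add: fun_eq_iff)
qed

lemma I3_derivation_mult_eq_zero:
  assumes "f \<in> I3" "g \<in> I3" "I3_mult f g = (\<lambda>a b c. 0)"
  shows "I3_mult (D f) g a b c + I3_mult f (D g) a b c = 0"
  using I3_derivation_Leibniz[OF assms(1,2)] assms(3) I3_derivation_zero by simp

lemma I3_derivation_e_expand: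
  "D (I3_e x) a b z =
      (if b = x \<and> z = x \<and> a \<le> x then D (I3_e x) a x x else 0)
    + (if a = x \<and> b = x \<and> x \<le> z then D (I3_e x) x x z else 0)"
proof -
  have "D (I3_e x) a b z = I3_mult (D (I3_e x)) (I3_e x) a b z + I3_mult (I3_e x) (D (I3_e x)) a b z"
    using I3_derivation_Leibniz[OF I3_e_in_I3 I3_e_in_I3, of x x a b z] by (simp only: I3_mult_e_idem)
  then show ?thesis
    by (simp add: I3_e_eq_unit I3_mult_unit_right I3_mult_unit_left) (auto dest: antisym)
qed

lemma I3_derivation_e_diag: "D (I3_e x) x x x = 0"
  using I3_derivation_e_expand[of x x x x] by simp

lemma I3_derivation_e_left:
  assumes "a \<le> x" "a \<noteq> x"
  shows "D (I3_e x) a x x = 0"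
proof -
  have "I3_mult (I3_unit a a x) (I3_e x) = (\<lambda>a b c. 0)"
    using assms unfolding I3_e_eq_unit by (intro I3_mult_unit_unit_eq_zero) simp
  then have "I3_mult (D (I3_unit a a x)) (I3_e x) a a x + I3_mult (I3_unit a a x) (D (I3_e x)) a a x = 0"
    using assms I3_unit_in_I3 I3_e_in_I3 by (intro I3_derivation_mult_eq_zero) auto
  then show ?thesis
    using assms unfolding I3_e_eq_unit I3_mult_unit_right I3_mult_unit_left by auto
qed

lemma I3_derivation_e_right:
  assumes "x \<le> z" "z \<noteq> x"
  shows "D (I3_e x) x x z = 0"
proof -
  have "I3_mult (I3_e x) (I3_unit x z z) = (\<lambda>a b c. 0)"
    using assms unfolding I3_e_eq_unit by (intro I3_mult_unit_unit_eq_zero) simp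
  then have "I3_mult (D (I3_e x)) (I3_unit x z z) x z z + I3_mult (I3_e x) (D (I3_unit x z z)) x z z = 0"
    using assms I3_unit_in_I3 I3_e_in_I3 by (intro I3_derivation_mult_eq_zero) auto
  then show ?thesis
    using assms unfolding I3_e_eq_unit I3_mult_unit_right I3_mult_unit_left by auto
qed

end

theorem lemma4p3:
  fixes D :: "('a::{order,finite} \<Rightarrow> 'a \<Rightarrow> 'a \<Rightarrow> 'r::comm_ring_1)
              \<Rightarrow> ('a \<Rightarrow> 'a \<Rightarrow> 'a \<Rightarrow> 'r)"
  assumes "I3_derivation D"
  shows "\<forall>x. D (I3_e x) = (\<lambda>a b c. 0)"
proof (intro allI ext)
  fix x a b z :: 'a
  show "D (I3_e x) a b z = 0"
    using I3_derivation_e_expand[OF assms, of x a b z]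
      I3_derivation_e_diag[OF assms, of x]
      I3_derivation_e_left[OF assms, of a x]
      I3_derivation_e_right[OF assms, of x z]
    by (cases "a = x"; cases "z = x") auto
qed

end
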